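(* Let $\mathcal{W}$ be a finite full binary forest. Then every node $x$ of $\mathcal{W}$ is deleted in the pruning procedure during the $r(x)$-th iteration.
   Context: A full binary forest is a finite rooted forest in which every node has $0$ or $2$ children. An ascending path is a sequence of nodes $(x_1,\dots,x_L)$ with $x_{k+1}$ the parent of $x_k$. In a rooted forest (not necessarily full) in which every node has at most 2 children, an only-child-path is an ascending path starting at a leaf and ending at the first encountered node that has a sibling, or at a root (it has length $1$ if the starting leaf has a sibling). Pruning procedure: $\mathcal{W}_{(0)}=\mathcal{W}$; in iteration $i\ge1$, $\mathcal{W}_{(i)}$ is obtained from $\mathcal{W}_{(i-1)}$ by deleting all nodes of all only-child-paths of $\mathcal{W}_{(i-1)}$; stop when the forest is empty. The function $r$ on nodes of $\mathcal{W}$: $r(x)=1$ if $x$ is a leaf; if $x$ has children $y_1,y_2$, $r(x)=r(y_1)+1$ when $r(y_1)=r(y_2)$, and $r(x)=\max\{r(y_1),r(y_2)\}$ otherwise. *)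

theory Defs
  imports Main
begin

text \<open>A rooted forest is given by a finite node set V and a partial parent
function par (par x = None: x is a root). Subforests obtained by deleting
nodes are represented by a subset S of V with the induced parent relation.\<close>

definition forest :: "'a set \<Rightarrow> ('a \<Rightarrow> 'a option) \<Rightarrow> bool" where
  "forest V par \<longleftrightarrow> finite V \<and> (\<forall>x\<in>V. \<forall>y. par x = Some y \<longrightarrow> y \<in> V)
     \<and> wf {(x, y). x \<in> V \<and> par x = Some y}"

definition spar :: "('a \<Rightarrow> 'a option) \<Rightarrow> 'a set \<Rightarrow> 'a \<Rightarrow> 'a option" where
  "spar par S x = (case par x of None \<Rightarrow> None | Some y \<Rightarrow> if y \<in> S then Some y else None)"

definition children :: "('a \<Rightarrow> 'a option) \<Rightarrow> 'a set \<Rightarrow> 'a \<Rightarrow> 'a set" where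
  "children par S x = {y \<in> S. spar par S y = Some x}"

definition is_leaf :: "('a \<Rightarrow> 'a option) \<Rightarrow> 'a set \<Rightarrow> 'a \<Rightarrow> bool" where
  "is_leaf par S x \<longleftrightarrow> x \<in> S \<and> children par S x = {}"

definition has_sibling :: "('a \<Rightarrow> 'a option) \<Rightarrow> 'a set \<Rightarrow> 'a \<Rightarrow> bool" where
  "has_sibling par S x \<longleftrightarrow> (\<exists>y\<in>S. y \<noteq> x \<and> spar par S x \<noteq> None \<and> spar par S y = spar par S x)"

definition full_binary_forest :: "'a set \<Rightarrow> ('a \<Rightarrow> 'a option) \<Rightarrow> bool" where
  "full_binary_forest V par \<longleftrightarrow> forest V par \<and> (\<forall>x\<in>V. card (children par V x) \<in> {0, 2})"

text \<open>x lies on some only-child-path of the subforest S: the ascending path starts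
at a leaf and continues from a node to its parent as long as the node has no
sibling (and is not a root).\<close>
inductive on_ocp :: "('a \<Rightarrow> 'a option) \<Rightarrow> 'a set \<Rightarrow> 'a \<Rightarrow> bool"
  for par S where
  start: "is_leaf par S x \<Longrightarrow> on_ocp par S x"
| step: "on_ocp par S y \<Longrightarrow> \<not> has_sibling par S y \<Longrightarrow> spar par S y = Some x \<Longrightarrow> on_ocp par S x"

definition prune_step :: "('a \<Rightarrow> 'a option) \<Rightarrow> 'a set \<Rightarrow> 'a set" where
  "prune_step par S = S - {x. on_ocp par S x}"

definition pruned :: "'a set \<Rightarrow> ('a \<Rightarrow> 'a option) \<Rightarrow> nat \<Rightarrow> 'a set" where
  "pruned V par i = (prune_step par ^^ i) V"

inductive r_rel :: "'a set \<Rightarrow> ('a \<Rightarrow> 'a option) \<Rightarrow> 'a \<Rightarrow> nat \<Rightarrow> bool"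
  for V par where
  leaf: "is_leaf par V x \<Longrightarrow> r_rel V par x 1"
| node: "x \<in> V \<Longrightarrow> children par V x = {y1, y2} \<Longrightarrow> y1 \<noteq> y2 \<Longrightarrow>
         r_rel V par y1 k1 \<Longrightarrow> r_rel V par y2 k2 \<Longrightarrow>
         r_rel V par x (if k1 = k2 then k1 + 1 else max k1 k2)"

definition r :: "'a set \<Rightarrow> ('a \<Rightarrow> 'a option) \<Rightarrow> 'a \<Rightarrow> nat" where
  "r V par x = (THE k. r_rel V par x k)"

end

theory Submission
  imports Defs
begin

text \<open>Let \<open>S\<^sub>i\<close> be the set of nodes with \<open>r x > i\<close>; we show \<open>\<W>\<^sub>(\<^sub>i\<^sub>) = S\<^sub>i\<close> by induction
on \<open>i\<close>. A node of \<open>S\<^sub>i\<close> with rank \<open>i + 1\<close> either has both children of rank \<open>\<le> i\<close>,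
and is then a leaf of \<open>S\<^sub>i\<close>, or has exactly one child of the same rank, whose
sibling has smaller rank and so is absent from \<open>S\<^sub>i\<close>. Hence the nodes of rank
\<open>i + 1\<close> are exactly those lying on only-child-paths of \<open>S\<^sub>i\<close>, and one pruning
step turns \<open>S\<^sub>i\<close> into \<open>S\<^sub>i\<^sub>+\<^sub>1\<close>.\<close>

lemma children_subset: "children par S x \<subseteq> S"
  unfolding children_def by auto

lemma mem_children_iff: "y \<in> children par V x \<longleftrightarrow> y \<in> V \<and> x \<in> V \<and> par y = Some x"
  unfolding children_def spar_def by (auto split: option.splits if_splits)

lemma children_restrict: "S \<subseteq> V \<Longrightarrow> x \<in> S \<Longrightarrow> children par S x = children par V x \<inter> S"
  unfolding children_def spar_def by (auto split: option.splits)

lemma spar_SomeD: "spar par S y = Some x \<Longrightarrow> par y = Some x \<and> x \<in> S"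
  unfolding spar_def by (auto split: option.splits if_splits)

lemma has_sibling_iff:
  assumes "spar par S y = Some x"
  shows "has_sibling par S y \<longleftrightarrow> (\<exists>z\<in>children par S x. z \<noteq> y)"
  using assms unfolding has_sibling_def children_def by auto

lemma on_ocp_mem: "on_ocp par S y \<Longrightarrow> y \<in> S"
  by (induction rule: on_ocp.induct) (auto simp: is_leaf_def dest: spar_SomeD)

lemma forest_wf: "forest V par \<Longrightarrow> wf {(x, y). x \<in> V \<and> par x = Some y}"
  unfolding forest_def by auto

lemma full_binary_children_cases:
  assumes "full_binary_forest V par" "x \<in> V"
  obtains "children par V x = {}"
    | y1 y2 where "y1 \<noteq> y2" "children par V x = {y1, y2}"
proof -
  have "finite (children par V x)"
    using assms children_subset[of par V x] unfolding full_binary_forest_def forest_def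
    by (meson finite_subset)
  moreover have "card (children par V x) \<in> {0, 2}"
    using assms unfolding full_binary_forest_def by auto
  ultimately show ?thesis using that by (auto simp: card_2_iff)
qed

lemma r_rel_exists:
  assumes fb: "full_binary_forest V par" and "x \<in> V"
  shows "\<exists>k. r_rel V par x k"
proof -
  have "wf {(x, y). x \<in> V \<and> par x = Some y}"
    using fb by (simp add: full_binary_forest_def forest_wf)
  then show ?thesis
    using \<open>x \<in> V\<close>
  proof (induction x rule: wf_induct_rule)
    case (less x)
    from fb \<open>x \<in> V\<close> show ?case
    proof (cases rule: full_binary_children_cases)
      case 1
      then show ?thesis using \<open>x \<in> V\<close> by (metis r_rel.leaf is_leaf_def)
    next
      case (2 y1 y2)
      then have "y1 \<in> V" "y2 \<in> V" "par y1 = Some x" "par y2 = Some x"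
        by (auto simp: mem_children_iff dest: equalityD2)
      with less.IH obtain k1 k2 where "r_rel V par y1 k1" "r_rel V par y2 k2" by blast
      then show ?thesis using r_rel.node[OF \<open>x \<in> V\<close> 2(2,1)] by blast
    qed
  qed
qed

lemma r_rel_unique: "r_rel V par x k \<Longrightarrow> r_rel V par x k' \<Longrightarrow> k' = k"
proof (induction arbitrary: k' rule: r_rel.induct)
  case (leaf x)
  from leaf.prems show ?case
    by cases (use leaf.hyps in \<open>auto simp: is_leaf_def\<close>)
next
  case (node x y1 y2 k1 k2)
  from node.prems show ?case
  proof cases
    case leaf
    then show ?thesis using node.hyps(2) by (simp add: is_leaf_def)
  next
    case (node z1 z2 m1 m2)
    then have "{z1, z2} = {y1, y2}" using \<open>children par V x = {y1, y2}\<close> by simp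
    then have "z1 = y1 \<and> z2 = y2 \<or> z1 = y2 \<and> z2 = y1" by (metis doubleton_eq_iff)
    then show ?thesis
      using node \<open>r_rel V par z1 m1\<close> \<open>r_rel V par z2 m2\<close> "node.IH"
      by (auto simp: max.commute)
  qed
qed

lemma r_eqI: "r_rel V par x k \<Longrightarrow> r V par x = k"
  unfolding r_def by (rule the_equality) (auto intro: r_rel_unique)

lemma r_rel_r: "full_binary_forest V par \<Longrightarrow> x \<in> V \<Longrightarrow> r_rel V par x (r V par x)"
  using r_rel_exists r_eqI by metis

lemma r_rel_pos: "r_rel V par x k \<Longrightarrow> k \<ge> 1"
  by (induction rule: r_rel.induct) auto

lemma r_pos: "full_binary_forest V par \<Longrightarrow> x \<in> V \<Longrightarrow> r V par x \<ge> 1"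
  by (rule r_rel_pos[OF r_rel_r])

lemma r_leaf: "x \<in> V \<Longrightarrow> children par V x = {} \<Longrightarrow> r V par x = 1"
  by (rule r_eqI, rule r_rel.leaf) (simp add: is_leaf_def)

lemma r_node:
  assumes fb: "full_binary_forest V par"
    and "x \<in> V" "children par V x = {y1, y2}" "y1 \<noteq> y2"
  shows "r V par x =
    (if r V par y1 = r V par y2 then r V par y1 + 1 else max (r V par y1) (r V par y2))"
proof -
  have "y1 \<in> V" "y2 \<in> V" using assms(3) children_subset[of par V x] by auto
  then show ?thesis
    by (intro r_eqI r_rel.node[OF assms(2-4)] r_rel_r[OF fb])
qed

lemma children_rank_cases:
  assumes fb: "full_binary_forest V par" and "x \<in> V"
  obtains "\<forall>y\<in>children par V x. r V par y < r V par x"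
    | y where "y \<in> children par V x" "r V par y = r V par x"
        "\<forall>z\<in>children par V x. z \<noteq> y \<longrightarrow> r V par z < r V par x"
  using fb \<open>x \<in> V\<close>
proof (cases rule: full_binary_children_cases)
  case 1
  then show ?thesis using that(1) by simp
next
  case (2 y1 y2)
  note rx = r_node[OF fb \<open>x \<in> V\<close> 2(2,1)]
  consider "r V par y1 = r V par y2" | "r V par y2 < r V par y1" | "r V par y1 < r V par y2"
    by linarith
  then show ?thesis
  proof cases
    case 1
    then show ?thesis using that(1) rx 2 by auto
  next
    case 2
    then show ?thesis using that(2)[of y1] rx \<open>children par V x = {y1, y2}\<close> by auto
  next
    case 3
    then show ?thesis using that(2)[of y2] rx \<open>children par V x = {y1, y2}\<close> by auto
  qed
qed

lemma r_le_Suc_if_children_le: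
  assumes fb: "full_binary_forest V par" and "x \<in> V"
    and le: "\<forall>y\<in>children par V x. r V par y \<le> k"
  shows "r V par x \<le> Suc k"
  using fb \<open>x \<in> V\<close>
proof (cases rule: full_binary_children_cases)
  case 1
  then show ?thesis using r_leaf[OF \<open>x \<in> V\<close>] by simp
next
  case (2 y1 y2)
  then show ?thesis using r_node[OF fb \<open>x \<in> V\<close> 2(2,1)] le by auto
qed

lemma r_eq_if_child_dominates:
  assumes fb: "full_binary_forest V par" and "x \<in> V" and "y \<in> children par V x"
    and less: "\<forall>z\<in>children par V x. z \<noteq> y \<longrightarrow> r V par z < r V par y"
  shows "r V par x = r V par y"
  using fb \<open>x \<in> V\<close>
proof (cases rule: full_binary_children_cases)
  case 1
  then show ?thesis using \<open>y \<in> children par V x\<close> by simp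
next
  case (2 y1 y2)
  then have "y = y1 \<and> r V par y2 < r V par y1 \<or> y = y2 \<and> r V par y1 < r V par y2"
    using \<open>y \<in> children par V x\<close> less by auto
  then show ?thesis using r_node[OF fb \<open>x \<in> V\<close> 2(2,1)] by auto
qed

lemma on_ocp_rank_above_imp_rank:
  assumes fb: "full_binary_forest V par"
    and "on_ocp par {x\<in>V. i < r V par x} x"
  shows "x \<in> V \<and> r V par x = Suc i"
  using assms(2)
proof (induction rule: on_ocp.induct)
  let ?S = "{x\<in>V. i < r V par x}"
  case (start x)
  then have "x \<in> V" "i < r V par x" and "children par V x \<inter> ?S = {}"
    by (auto simp: is_leaf_def children_restrict[of ?S V x])
  then have "\<forall>y\<in>children par V x. r V par y \<le> i"
    using children_subset[of par V x] by fastforce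
  then show ?case
    using r_le_Suc_if_children_le[OF fb \<open>x \<in> V\<close>] \<open>x \<in> V\<close> \<open>i < r V par x\<close> by fastforce
next
  let ?S = "{x\<in>V. i < r V par x}"
  case (step y x)
  then have "par y = Some x" "x \<in> ?S" "y \<in> ?S" "y \<in> V" "r V par y = Suc i"
    by (auto dest: spar_SomeD on_ocp_mem)
  then have "y \<in> children par V x" by (simp add: mem_children_iff)
  have "\<forall>z\<in>children par V x. z \<noteq> y \<longrightarrow> z \<notin> ?S"
    using step(2) has_sibling_iff[OF step(3)] children_restrict[of ?S V x] \<open>x \<in> ?S\<close> by auto
  then have "\<forall>z\<in>children par V x. z \<noteq> y \<longrightarrow> r V par z < r V par y"
    using children_subset[of par V x] \<open>r V par y = Suc i\<close> by fastforce
  then show ?case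
    using r_eq_if_child_dominates[OF fb _ \<open>y \<in> children par V x\<close>] \<open>x \<in> ?S\<close> \<open>r V par y = Suc i\<close>
    by simp
qed

lemma rank_imp_on_ocp_rank_above:
  assumes fb: "full_binary_forest V par" and "x \<in> V" "r V par x = Suc i"
  shows "on_ocp par {x\<in>V. i < r V par x} x"
proof -
  let ?S = "{x\<in>V. i < r V par x}"
  have "wf {(x, y). x \<in> V \<and> par x = Some y}"
    using fb by (simp add: full_binary_forest_def forest_wf)
  then show ?thesis
    using assms(2,3)
  proof (induction x rule: wf_induct_rule)
    case (less x)
    then have "x \<in> ?S" by simp
    from fb \<open>x \<in> V\<close> show ?case
    proof (cases rule: children_rank_cases)
      case 1
      then have "children par ?S x = {}"
        using children_restrict[of ?S V x] \<open>x \<in> ?S\<close> less.prems(2) by fastforce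
      then show ?thesis using \<open>x \<in> ?S\<close> by (simp add: on_ocp.start is_leaf_def)
    next
      case (2 y)
      then have "y \<in> V" "par y = Some x" by (auto simp: mem_children_iff)
      then have "on_ocp par ?S y" using less 2(2) by auto
      moreover have sp: "spar par ?S y = Some x"
        using \<open>par y = Some x\<close> \<open>x \<in> ?S\<close> by (simp add: spar_def)
      moreover have "\<not> has_sibling par ?S y"
        using has_sibling_iff[OF sp] children_restrict[of ?S V x] \<open>x \<in> ?S\<close>
          2(3) less.prems(2) by auto
      ultimately show ?thesis by (blast intro: on_ocp.step)
    qed
  qed
qed

lemma prune_step_rank_above:
  assumes fb: "full_binary_forest V par"
  shows "prune_step par {x\<in>V. i < r V par x} = {x\<in>V. Suc i < r V par x}"
proof -
  have "{x. on_ocp par {x\<in>V. i < r V par x} x} = {x\<in>V. r V par x = Suc i}"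
    using on_ocp_rank_above_imp_rank[OF fb] rank_imp_on_ocp_rank_above[OF fb] by blast
  then have "prune_step par {x\<in>V. i < r V par x}
      = {x\<in>V. i < r V par x} - {x\<in>V. r V par x = Suc i}"
    unfolding prune_step_def by (rule arg_cong)
  also have "\<dots> = {x\<in>V. Suc i < r V par x}"
    by auto
  finally show ?thesis .
qed

lemma pruned_eq_rank_above:
  assumes "full_binary_forest V par"
  shows "pruned V par i = {x\<in>V. i < r V par x}"
proof (induction i)
  case 0
  then show ?case using r_pos[OF assms] by (force simp: pruned_def)
next
  case (Suc i)
  have "pruned V par (Suc i) = prune_step par (pruned V par i)"
    by (simp add: pruned_def)
  then show ?case using Suc.IH prune_step_rank_above[OF assms] by simp
qed

theorem lemma10:
  fixes V :: "'a set" and par :: "'a \<Rightarrow> 'a option" and x :: 'a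
  assumes "full_binary_forest V par" and "x \<in> V"
  shows "x \<in> pruned V par (r V par x - 1) \<and> x \<notin> pruned V par (r V par x)"
  using pruned_eq_rank_above[OF assms(1)] r_pos[OF assms] assms(2) by auto

end
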